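(* Let $(X,d)$ be a complete metric space, $\preceq$ a partial order on $X$, and $F:X\times X\rightarrow X$ such that for every $\varepsilon>0$ there exists $\delta(\varepsilon)>0$ for which, for all $x,y,u,v\in X$, \[ x\preceq u,\ y\succeq v,\ \varepsilon\leq\tfrac{1}{2}[d(x,u)+d(y,v)]<\varepsilon+\delta(\varepsilon)\Rightarrow d(F(x,y),F(u,v))<\varepsilon. \] Suppose: (H1) $F$ has the mixed monotone property; (H2) there exist $x_{0},y_{0}\in X$ with $x_{0}\preceq F(x_{0},y_{0})$ and $y_{0}\succeq F(y_{0},x_{0})$. If either (H3) $F$ is continuous, or (H4) whenever $\{x_{n}\}$ is a nondecreasing (respectively, nonincreasing) sequence in $X$ with $x_{n}\rightarrow x$, then $x_{n}\preceq x$ (respectively, $x_{n}\succeq x$) for all $n$, then $F$ has a coupled fixed point $(x^{\ast},y^{\ast})$, i.e., $F(x^{\ast},y^{\ast})=x^{\ast}$ and $F(y^{\ast},x^{\ast})=y^{\ast}$. If in addition (H5) $X$ is $\preceq$--connected, then $x^{\ast}=y^{\ast}$, $(x^{\ast},x^{\ast})$ is the unique coupled fixed point of $F$, $x^{\ast}$ is the unique fixed point of $F$ (unique $x$ with $F(x,x)=x$), and $F^{n}(x,y)\rightarrow x^{\ast}$ as $n\rightarrow\infty$ for all $x,y\in X$.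
   Context: $F$ has the mixed monotone property if for all $x_1,x_2,y_1,y_2\in X$, $x_1\preceq x_2$ and $y_1\succeq y_2$ imply $F(x_1,y_1)\preceq F(x_2,y_2)$. $X$ is $\preceq$--connected if for every $x,y\in X$ there exist $z_0,\dots,z_n\in X$ with $z_0=x$, $z_n=y$ and $z_{i-1},z_i$ comparable (i.e., $z_{i-1}\preceq z_i$ or $z_i\preceq z_{i-1}$) for every $i\in\{1,\dots,n\}$. Iterates of $F$: with $(G\ast H)(x,y)=G(H(x,y),H(y,x))$ for $G,H:X\times X\to X$, set $F^{0}(x,y)=x$ and $F^{n+1}=F\ast F^{n}$. *)

theory Defs
  imports "HOL-Analysis.Analysis"
begin

definition mixed_monotone :: "('a \<Rightarrow> 'a \<Rightarrow> bool) \<Rightarrow> ('a \<Rightarrow> 'a \<Rightarrow> 'a) \<Rightarrow> bool" where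
  "mixed_monotone le F \<longleftrightarrow>
     (\<forall>x1 x2 y1 y2. le x1 x2 \<and> le y2 y1 \<longrightarrow> le (F x1 y1) (F x2 y2))"

definition le_comparable :: "('a \<Rightarrow> 'a \<Rightarrow> bool) \<Rightarrow> 'a \<Rightarrow> 'a \<Rightarrow> bool" where
  "le_comparable le x y \<longleftrightarrow> le x y \<or> le y x"

definition preceq_connected :: "('a \<Rightarrow> 'a \<Rightarrow> bool) \<Rightarrow> bool" where
  "preceq_connected le \<longleftrightarrow>
     (\<forall>x y. \<exists>(n::nat) (z::nat \<Rightarrow> 'a). z 0 = x \<and> z n = y \<and> (\<forall>i\<in>{1..n}. le_comparable le (z (i - 1)) (z i)))"

fun coupled_iter :: "nat \<Rightarrow> ('a \<Rightarrow> 'a \<Rightarrow> 'a) \<Rightarrow> 'a \<Rightarrow> 'a \<Rightarrow> 'a" where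
  "coupled_iter 0 F = (\<lambda>x y. x)"
| "coupled_iter (Suc n) F = (\<lambda>x y. F (coupled_iter n F x y) (coupled_iter n F y x))"

end

theory Submission
  imports Defs
begin

text \<open>
  Pass to the product X \<times> X with the order (x, y) \<le> (u, v) iff x \<preceq> u and v \<preceq> y, the
  mean distance D, and the map T (x, y) = (F x y, F y x). Mixed monotonicity makes T monotone,
  and the hypothesis on F says that T is a Meir--Keeler contraction for D on comparable pairs.
  The orbit of (x0, y0) is then increasing and Cauchy, and either continuity or the
  order-closedness assumption makes its limit a fixed point of T, i.e. a coupled fixed point.
  Under \<preceq>-connectedness any two points of X \<times> X are joined by a chain of comparable pairs,
  whose T-orbits approach each other; hence all orbits have the same asymptotic behaviour,
  which gives uniqueness, the diagonal form of the fixed point, and global convergence.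
\<close>

lemma Meir_Keeler_decseq_tendsto_0:
  fixes a :: "nat \<Rightarrow> real"
  assumes nonneg: "\<And>n. 0 \<le> a n" and dec: "\<And>n. a (Suc n) \<le> a n"
    and MK: "\<And>\<epsilon>. \<epsilon> > 0 \<Longrightarrow> \<exists>\<delta>>0. \<forall>n. \<epsilon> \<le> a n \<and> a n < \<epsilon> + \<delta> \<longrightarrow> a (Suc n) < \<epsilon>"
  shows "a \<longlonglongrightarrow> 0"
proof -
  obtain L where lim: "a \<longlonglongrightarrow> L" and L_le: "\<And>n. L \<le> a n"
    using decseq_convergent[of a 0] dec nonneg by (metis decseq_SucI)
  have "L \<ge> 0" using lim nonneg by (meson LIMSEQ_le_const)
  have "L = 0"
  proof (rule ccontr)
    assume "L \<noteq> 0"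
    with \<open>L \<ge> 0\<close> obtain \<delta> where "\<delta> > 0" and \<delta>: "\<forall>n. L \<le> a n \<and> a n < L + \<delta> \<longrightarrow> a (Suc n) < L"
      using MK[of L] by auto
    have "eventually (\<lambda>n. a n < L + \<delta>) sequentially"
      using order_tendstoD(2)[OF lim] \<open>\<delta> > 0\<close> by simp
    then obtain n where "a n < L + \<delta>" by (meson eventually_sequentially order_refl)
    with \<delta> L_le have "a (Suc n) < L" by blast
    with L_le show False by (meson not_le)
  qed
  with lim show ?thesis by simp
qed

lemma preceq_connected_rtranclp:
  fixes le :: "'a \<Rightarrow> 'a \<Rightarrow> bool"
  assumes "preceq_connected le"
  shows "(le_comparable le)\<^sup>*\<^sup>* x y"
proof -
  obtain n and z :: "nat \<Rightarrow> 'a"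
    where z: "z 0 = x" "z n = y" "\<forall>i\<in>{1..n}. le_comparable le (z (i - 1)) (z i)"
    using assms unfolding preceq_connected_def by blast
  have "(le_comparable le)\<^sup>*\<^sup>* (z 0) (z i)" if "i \<le> n" for i
    using that
  proof (induction i)
    case (Suc i)
    then have "(le_comparable le)\<^sup>*\<^sup>* (z 0) (z i)" "le_comparable le (z i) (z (Suc i))"
      using z(3)[rule_format, of "Suc i"] by simp_all
    then show ?case by (rule rtranclp.rtrancl_into_rtrancl)
  qed simp
  with z show ?thesis by blast
qed

lemma funpow_fixed_point: "f x = x \<Longrightarrow> (f ^^ n) x = x"
  by (induction n) simp_all

locale coupled_Meir_Keeler =
  fixes le :: "'a::complete_space \<Rightarrow> 'a \<Rightarrow> bool"
    and F :: "'a \<Rightarrow> 'a \<Rightarrow> 'a"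
  assumes refl: "\<And>x. le x x"
    and trans: "\<And>x y z. le x y \<Longrightarrow> le y z \<Longrightarrow> le x z"
    and F_Meir_Keeler: "\<forall>\<epsilon>>0. \<exists>\<delta>>0. \<forall>x y u v.
        le x u \<and> le v y \<and> \<epsilon> \<le> (dist x u + dist y v) / 2 \<and> (dist x u + dist y v) / 2 < \<epsilon> + \<delta>
        \<longrightarrow> dist (F x y) (F u v) < \<epsilon>"
    and mixed_mono: "mixed_monotone le F"
begin

definition T :: "'a \<times> 'a \<Rightarrow> 'a \<times> 'a" where
  "T p = (F (fst p) (snd p), F (snd p) (fst p))"

definition D :: "'a \<times> 'a \<Rightarrow> 'a \<times> 'a \<Rightarrow> real" where
  "D p q = (dist (fst p) (fst q) + dist (snd p) (snd q)) / 2"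

definition pair_le :: "'a \<times> 'a \<Rightarrow> 'a \<times> 'a \<Rightarrow> bool" where
  "pair_le p q \<longleftrightarrow> le (fst p) (fst q) \<and> le (snd q) (snd p)"

definition pair_comparable :: "'a \<times> 'a \<Rightarrow> 'a \<times> 'a \<Rightarrow> bool" where
  "pair_comparable p q \<longleftrightarrow> pair_le p q \<or> pair_le q p"

definition asymptotic :: "'a \<times> 'a \<Rightarrow> 'a \<times> 'a \<Rightarrow> bool" where
  "asymptotic p q \<longleftrightarrow> (\<lambda>n. D ((T ^^ n) p) ((T ^^ n) q)) \<longlonglongrightarrow> 0"

lemma funpow_T_Pair: "(T ^^ n) (x, y) = (coupled_iter n F x y, coupled_iter n F y x)"
  by (induction n) (simp_all add: T_def)

lemma D_commute: "D p q = D q p"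
  by (simp add: D_def dist_commute)

lemma D_nonneg: "0 \<le> D p q"
  by (simp add: D_def)

lemma D_self [simp]: "D p p = 0"
  by (simp add: D_def)

lemma D_eq_0_iff: "D p q = 0 \<longleftrightarrow> p = q"
  by (auto simp: D_def prod_eq_iff add_nonneg_eq_0_iff)

lemma D_triangle: "D p r \<le> D p q + D q r"
  using dist_triangle[of "fst p" "fst r" "fst q"] dist_triangle[of "snd p" "snd r" "snd q"]
  by (simp add: D_def field_simps)

lemma D_le_dist: "D p q \<le> dist p q"
  using dist_fst_le[of p q] dist_snd_le[of p q] by (simp add: D_def)

lemma dist_le_D: "dist p q \<le> 2 * D p q"
  using sqrt_sum_squares_le_sum[of "dist (fst p) (fst q)" "dist (snd p) (snd q)"]
  by (simp add: D_def dist_prod_def)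

lemma tendsto_iff_D: "f \<longlonglongrightarrow> p \<longleftrightarrow> (\<lambda>n. D (f n) p) \<longlonglongrightarrow> 0"
proof
  assume "f \<longlonglongrightarrow> p"
  then have "(\<lambda>n. dist (f n) p) \<longlonglongrightarrow> 0" by (rule tendsto_dist_iff[THEN iffD1])
  then show "(\<lambda>n. D (f n) p) \<longlonglongrightarrow> 0"
    by (rule Lim_null_comparison[rotated]) (simp add: D_nonneg D_le_dist)
next
  assume "(\<lambda>n. D (f n) p) \<longlonglongrightarrow> 0"
  then have "(\<lambda>n. 2 * D (f n) p) \<longlonglongrightarrow> 0" by (simp add: tendsto_mult_right_zero)
  then have "(\<lambda>n. dist (f n) p) \<longlonglongrightarrow> 0"
    by (rule Lim_null_comparison[rotated]) (simp add: dist_le_D)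
  then show "f \<longlonglongrightarrow> p" by (rule tendsto_dist_iff[THEN iffD2])
qed

lemma pair_le_refl: "pair_le p p"
  by (simp add: pair_le_def refl)

lemma pair_le_trans: "pair_le p q \<Longrightarrow> pair_le q r \<Longrightarrow> pair_le p r"
  unfolding pair_le_def by (meson trans)

lemma pair_le_T: "pair_le p q \<Longrightarrow> pair_le (T p) (T q)"
  using mixed_mono unfolding pair_le_def T_def mixed_monotone_def by auto

lemma pair_comparable_funpow_T:
  "pair_comparable p q \<Longrightarrow> pair_comparable ((T ^^ n) p) ((T ^^ n) q)"
  by (induction n) (auto simp: pair_comparable_def intro: pair_le_T)

lemma dist_F_le:
  assumes "le x u" "le v y"
  shows "dist (F x y) (F u v) \<le> (dist x u + dist y v) / 2"
proof (cases "x = u \<and> y = v")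
  case False
  then have "dist x u + dist y v \<noteq> 0"
    by (simp add: add_nonneg_eq_0_iff)
  then have "(dist x u + dist y v) / 2 > 0"
    by (simp add: less_le)
  from F_Meir_Keeler[rule_format, OF this] obtain \<delta> where "\<delta> > 0"
    and \<delta>: "\<forall>x' y' u' v'. le x' u' \<and> le v' y'
      \<and> (dist x u + dist y v) / 2 \<le> (dist x' u' + dist y' v') / 2
      \<and> (dist x' u' + dist y' v') / 2 < (dist x u + dist y v) / 2 + \<delta>
      \<longrightarrow> dist (F x' y') (F u' v') < (dist x u + dist y v) / 2"
    by blast
  have "dist (F x y) (F u v) < (dist x u + dist y v) / 2"
    using \<delta>[rule_format, of x u v y] assms \<open>\<delta> > 0\<close> by simp
  then show ?thesis by simp
qed simp

lemma pair_le_Meir_Keeler: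
  assumes "\<epsilon> > 0"
  shows "\<exists>\<delta>>0. \<forall>p q. pair_le p q \<and> \<epsilon> \<le> D p q \<and> D p q < \<epsilon> + \<delta> \<longrightarrow> D (T p) (T q) < \<epsilon>"
proof -
  obtain \<delta> where "\<delta> > 0" and \<delta>: "\<forall>x y u v. le x u \<and> le v y \<and> \<epsilon> \<le> (dist x u + dist y v) / 2
      \<and> (dist x u + dist y v) / 2 < \<epsilon> + \<delta> \<longrightarrow> dist (F x y) (F u v) < \<epsilon>"
    using F_Meir_Keeler[rule_format, OF assms] by blast
  have "D (T p) (T q) < \<epsilon>" if "pair_le p q" "\<epsilon> \<le> D p q" "D p q < \<epsilon> + \<delta>" for p q
  proof -
    have "dist (F (fst p) (snd p)) (F (fst q) (snd q)) < \<epsilon>"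
      using that \<delta>[rule_format, of "fst p" "fst q" "snd q" "snd p"] by (simp add: pair_le_def D_def)
    moreover have "dist (F (snd q) (fst q)) (F (snd p) (fst p)) < \<epsilon>"
      using that \<delta>[rule_format, of "snd q" "snd p" "fst p" "fst q"]
      by (simp add: pair_le_def D_def dist_commute add.commute)
    ultimately show ?thesis by (simp add: D_def T_def dist_commute)
  qed
  with \<open>\<delta> > 0\<close> show ?thesis by blast
qed

lemma comparable_Meir_Keeler:
  assumes "\<epsilon> > 0"
  shows "\<exists>\<delta>>0. \<forall>p q. pair_comparable p q \<and> \<epsilon> \<le> D p q \<and> D p q < \<epsilon> + \<delta> \<longrightarrow> D (T p) (T q) < \<epsilon>"
  using pair_le_Meir_Keeler[OF assms] unfolding pair_comparable_def by (metis D_commute)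

lemma comparable_D_T_le:
  assumes "pair_comparable p q"
  shows "D (T p) (T q) \<le> D p q"
proof -
  have "D (T p) (T q) \<le> D p q" if "pair_le p q" for p q
    using that dist_F_le[of "fst p" "fst q" "snd q" "snd p"] dist_F_le[of "snd q" "snd p" "fst p" "fst q"]
    by (simp add: pair_le_def D_def T_def dist_commute)
  with assms show ?thesis unfolding pair_comparable_def by (metis D_commute)
qed

lemma asymptotic_refl: "asymptotic p p"
  by (simp add: asymptotic_def)

lemma asymptotic_trans:
  assumes "asymptotic p q" "asymptotic q r"
  shows "asymptotic p r"
proof -
  let ?d = "\<lambda>p q n. D ((T ^^ n) p) ((T ^^ n) q)"
  have "(\<lambda>n. ?d p q n + ?d q r n) \<longlonglongrightarrow> 0"
    using tendsto_add[OF assms[unfolded asymptotic_def]] by simp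
  then show ?thesis unfolding asymptotic_def
    by (rule Lim_null_comparison[rotated]) (simp add: D_nonneg D_triangle)
qed

lemma asymptotic_if_comparable:
  assumes "pair_comparable p q"
  shows "asymptotic p q"
  unfolding asymptotic_def
proof (rule Meir_Keeler_decseq_tendsto_0)
  show "D ((T ^^ Suc n) p) ((T ^^ Suc n) q) \<le> D ((T ^^ n) p) ((T ^^ n) q)" for n
    using comparable_D_T_le pair_comparable_funpow_T[OF assms] by simp
  fix \<epsilon> :: real
  assume "\<epsilon> > 0"
  then obtain \<delta> where "\<delta> > 0"
    and \<delta>: "\<forall>p q. pair_comparable p q \<and> \<epsilon> \<le> D p q \<and> D p q < \<epsilon> + \<delta> \<longrightarrow> D (T p) (T q) < \<epsilon>"
    using comparable_Meir_Keeler by blast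
  show "\<exists>\<delta>>0. \<forall>n. \<epsilon> \<le> D ((T ^^ n) p) ((T ^^ n) q) \<and> D ((T ^^ n) p) ((T ^^ n) q) < \<epsilon> + \<delta>
      \<longrightarrow> D ((T ^^ Suc n) p) ((T ^^ Suc n) q) < \<epsilon>"
  proof (intro exI[of _ \<delta>] conjI allI impI)
    fix n
    assume "\<epsilon> \<le> D ((T ^^ n) p) ((T ^^ n) q) \<and> D ((T ^^ n) p) ((T ^^ n) q) < \<epsilon> + \<delta>"
    then show "D ((T ^^ Suc n) p) ((T ^^ Suc n) q) < \<epsilon>"
      using \<delta>[rule_format, of "(T ^^ n) p" "(T ^^ n) q"] pair_comparable_funpow_T[OF assms] by simp
  qed (rule \<open>\<delta> > 0\<close>)
qed (rule D_nonneg)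

text \<open>
  An orbit cannot drift away from s N: as long as D (s N) (s (N + k)) lies in [\<epsilon>, \<epsilon> + \<delta>),
  the Meir--Keeler condition brings D (s (N + 1)) (s (N + k + 1)) below \<epsilon>, and s (N + 1) is
  within \<delta>/2 of s N. So all later points stay within \<epsilon> + \<delta>/2 of s N.
\<close>
lemma Meir_Keeler_Cauchy:
  assumes comparable: "\<And>m n. m \<le> n \<Longrightarrow> pair_comparable (s m) (s n)"
    and s_Suc: "\<And>n. s (Suc n) = T (s n)"
    and step_0: "(\<lambda>n. D (s n) (s (Suc n))) \<longlonglongrightarrow> 0"
    and "e > 0"
  shows "\<exists>N. \<forall>m\<ge>N. \<forall>n\<ge>N. D (s m) (s n) < e"
proof -
  define \<epsilon> where "\<epsilon> = e / 4"
  have "\<epsilon> > 0" using \<open>e > 0\<close> by (simp add: \<epsilon>_def)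
  then obtain \<delta>0 where "\<delta>0 > 0"
    and \<delta>0: "\<forall>p q. pair_comparable p q \<and> \<epsilon> \<le> D p q \<and> D p q < \<epsilon> + \<delta>0 \<longrightarrow> D (T p) (T q) < \<epsilon>"
    using comparable_Meir_Keeler by blast
  define \<delta> where "\<delta> = min \<delta>0 \<epsilon>"
  have "\<delta> > 0" "\<delta> \<le> \<epsilon>"
    using \<open>\<delta>0 > 0\<close> \<open>\<epsilon> > 0\<close> by (simp_all add: \<delta>_def)
  have \<delta>: "\<forall>p q. pair_comparable p q \<and> \<epsilon> \<le> D p q \<and> D p q < \<epsilon> + \<delta> \<longrightarrow> D (T p) (T q) < \<epsilon>"
    using \<delta>0 by (auto simp: \<delta>_def)
  obtain N where N: "\<And>n. n \<ge> N \<Longrightarrow> D (s n) (s (Suc n)) < \<delta> / 2"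
    using LIMSEQ_D[OF step_0, of "\<delta> / 2"] \<open>\<delta> > 0\<close> D_nonneg by fastforce
  have stay: "D (s N) (s (N + k)) < \<epsilon> + \<delta> / 2" for k
  proof (induction k)
    case 0
    then show ?case using \<open>\<epsilon> > 0\<close> \<open>\<delta> > 0\<close> by simp
  next
    case (Suc k)
    have comparable_N: "pair_comparable (s N) (s (N + k))" using comparable by simp
    have "D (T (s N)) (T (s (N + k))) < \<epsilon>"
    proof (cases "\<epsilon> \<le> D (s N) (s (N + k))")
      case True
      moreover have "D (s N) (s (N + k)) < \<epsilon> + \<delta>" using Suc.IH \<open>\<delta> > 0\<close> by linarith
      ultimately show ?thesis using \<delta> comparable_N by blast
    next
      case False
      then show ?thesis using comparable_D_T_le[OF comparable_N] by linarith
    qed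
    moreover have "D (s N) (s (N + Suc k)) \<le> D (s N) (s (Suc N)) + D (T (s N)) (T (s (N + k)))"
      using D_triangle s_Suc by (metis add_Suc_right)
    ultimately show ?case using N[of N] by linarith
  qed
  have "D (s m) (s n) < e" if "m \<ge> N" "n \<ge> N" for m n
  proof -
    have "D (s N) (s m) < \<epsilon> + \<delta> / 2" "D (s N) (s n) < \<epsilon> + \<delta> / 2"
      using that stay[of "m - N"] stay[of "n - N"] by simp_all
    moreover have "D (s m) (s n) \<le> D (s N) (s m) + D (s N) (s n)"
      using D_triangle[of "s m" "s n" "s N"] D_commute[of "s m" "s N"] by simp
    ultimately show ?thesis using \<open>\<delta> \<le> \<epsilon>\<close> \<open>e > 0\<close> unfolding \<epsilon>_def by linarith
  qed
  then show ?thesis by blast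
qed

lemma orbit_mono:
  assumes "pair_le p (T p)" "m \<le> n"
  shows "pair_le ((T ^^ m) p) ((T ^^ n) p)"
  using assms(2)
proof (induction n rule: dec_induct)
  case (step n)
  have "pair_le ((T ^^ n) p) ((T ^^ n) (T p))"
    by (induction n) (simp_all add: assms(1) pair_le_T)
  with step.IH show ?case by (auto simp: funpow_swap1 intro: pair_le_trans)
qed (rule pair_le_refl)

lemma Cauchy_orbit:
  assumes "pair_le p (T p)"
  shows "Cauchy (\<lambda>n. (T ^^ n) p)"
proof (rule metric_CauchyI)
  fix e :: real
  assume "e > 0"
  have comparable: "pair_comparable ((T ^^ m) p) ((T ^^ n) p)" if "m \<le> n" for m n
    using orbit_mono[OF assms that] by (simp add: pair_comparable_def)
  have "asymptotic p (T p)"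
    using assms by (simp add: asymptotic_if_comparable pair_comparable_def)
  then have step_0: "(\<lambda>n. D ((T ^^ n) p) ((T ^^ Suc n) p)) \<longlonglongrightarrow> 0"
    unfolding asymptotic_def funpow_Suc_right comp_def .
  have "\<exists>N. \<forall>m\<ge>N. \<forall>n\<ge>N. D ((T ^^ m) p) ((T ^^ n) p) < e / 2"
  proof (rule Meir_Keeler_Cauchy[where s = "\<lambda>n. (T ^^ n) p"])
    show "e / 2 > 0" using \<open>e > 0\<close> by simp
  qed (fact comparable, simp, fact step_0)
  then obtain N where N: "\<forall>m\<ge>N. \<forall>n\<ge>N. D ((T ^^ m) p) ((T ^^ n) p) < e / 2" ..
  have "dist ((T ^^ m) p) ((T ^^ n) p) < e" if "m \<ge> N" "n \<ge> N" for m n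
    using N that dist_le_D[of "(T ^^ m) p" "(T ^^ n) p"] by fastforce
  then show "\<exists>N. \<forall>m\<ge>N. \<forall>n\<ge>N. dist ((T ^^ m) p) ((T ^^ n) p) < e" by blast
qed

lemma continuous_on_T:
  assumes cont: "continuous_on UNIV (\<lambda>p. F (fst p) (snd p))"
  shows "continuous_on UNIV T"
proof -
  have "continuous_on UNIV (\<lambda>p :: 'a \<times> 'a. (snd p, fst p))"
    by (intro continuous_intros)
  from continuous_on_compose2[OF cont this]
  have "continuous_on UNIV (\<lambda>p. F (snd p) (fst p))" by simp
  with cont show ?thesis
    unfolding T_def by (intro continuous_on_Pair)
qed

lemma exists_fixed_point:
  assumes start: "pair_le p0 (T p0)"
    and continuous_or_order_closed: "continuous_on UNIV (\<lambda>p. F (fst p) (snd p)) \<or>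
      ((\<forall>s x. (\<forall>m n. m \<le> n \<longrightarrow> le (s m) (s n)) \<and> s \<longlonglongrightarrow> x \<longrightarrow> (\<forall>n. le (s n) x)) \<and>
       (\<forall>s x. (\<forall>m n. m \<le> n \<longrightarrow> le (s n) (s m)) \<and> s \<longlonglongrightarrow> x \<longrightarrow> (\<forall>n. le x (s n))))"
  shows "\<exists>p. T p = p"
proof -
  define s where "s = (\<lambda>n. (T ^^ n) p0)"
  have "convergent s"
    using Cauchy_orbit[OF start] by (simp add: s_def Cauchy_convergent_iff)
  then obtain p where lim: "s \<longlonglongrightarrow> p"
    unfolding convergent_def ..
  have "(\<lambda>n. T (s n)) \<longlonglongrightarrow> p"
    using LIMSEQ_Suc[OF lim] by (simp add: s_def)
  moreover from continuous_or_order_closed have "(\<lambda>n. T (s n)) \<longlonglongrightarrow> T p"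
  proof
    assume "continuous_on UNIV (\<lambda>p. F (fst p) (snd p))"
    from continuous_on_tendsto_compose[OF continuous_on_T[OF this] lim] show ?thesis by simp
  next
    assume order_closed: "(\<forall>s x. (\<forall>m n. m \<le> n \<longrightarrow> le (s m) (s n)) \<and> s \<longlonglongrightarrow> x \<longrightarrow> (\<forall>n. le (s n) x)) \<and>
       (\<forall>s x. (\<forall>m n. m \<le> n \<longrightarrow> le (s n) (s m)) \<and> s \<longlonglongrightarrow> x \<longrightarrow> (\<forall>n. le x (s n)))"
    have mono_fst: "\<forall>m n. m \<le> n \<longrightarrow> le (fst (s m)) (fst (s n))"
      and antimono_snd: "\<forall>m n. m \<le> n \<longrightarrow> le (snd (s n)) (snd (s m))"
      using orbit_mono[OF start] by (simp_all add: pair_le_def s_def)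
    have "le (fst (s n)) (fst p)" "le (snd p) (snd (s n))" for n
      using order_closed[THEN conjunct1, rule_format, OF conjI[OF mono_fst tendsto_fst[OF lim]]]
        order_closed[THEN conjunct2, rule_format, OF conjI[OF antimono_snd tendsto_snd[OF lim]]]
      by simp_all
    then have D_T_le: "D (T (s n)) (T p) \<le> D (s n) p" for n
      by (simp add: comparable_D_T_le pair_comparable_def pair_le_def)
    from lim have "(\<lambda>n. D (s n) p) \<longlonglongrightarrow> 0"
      by (rule tendsto_iff_D[THEN iffD1])
    then have "(\<lambda>n. D (T (s n)) (T p)) \<longlonglongrightarrow> 0"
      by (rule Lim_null_comparison[rotated]) (simp add: D_nonneg D_T_le)
    then show ?thesis by (rule tendsto_iff_D[THEN iffD2])
  qed
  ultimately show ?thesis using LIMSEQ_unique by blast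
qed

lemma asymptotic_if_connected:
  assumes "preceq_connected le"
  shows "asymptotic p q"
proof -
  have first: "asymptotic (x, y) (u, y)" if "(le_comparable le)\<^sup>*\<^sup>* x u" for x u y
    using that
  proof (induction rule: rtranclp_induct)
    case (step u w)
    have "pair_comparable (u, y) (w, y)"
      using \<open>le_comparable le u w\<close> refl
      unfolding le_comparable_def pair_comparable_def pair_le_def by auto
    from asymptotic_trans[OF step.IH asymptotic_if_comparable[OF this]] show ?case .
  qed (rule asymptotic_refl)
  have second: "asymptotic (x, y) (x, v)" if "(le_comparable le)\<^sup>*\<^sup>* y v" for x y v
    using that
  proof (induction rule: rtranclp_induct)
    case (step v w)
    have "pair_comparable (x, v) (x, w)"
      using \<open>le_comparable le v w\<close> refl
      unfolding le_comparable_def pair_comparable_def pair_le_def by auto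
    from asymptotic_trans[OF step.IH asymptotic_if_comparable[OF this]] show ?case .
  qed (rule asymptotic_refl)
  obtain x y u v where "p = (x, y)" "q = (u, v)" by (cases p, cases q)
  with asymptotic_trans[OF first second, OF preceq_connected_rtranclp[OF assms]
      preceq_connected_rtranclp[OF assms]]
  show ?thesis by simp
qed

lemma asymptotic_fixed_points_eq:
  assumes "asymptotic p q" "T p = p" "T q = q"
  shows "p = q"
proof -
  from assms(1) have "D p q = 0"
    by (simp add: asymptotic_def funpow_fixed_point[where f = T, OF assms(2)] funpow_fixed_point[where f = T, OF assms(3)]
        LIMSEQ_const_iff)
  then show ?thesis by (simp add: D_eq_0_iff)
qed

lemma connected_fixed_point:
  assumes connected: "preceq_connected le" and fixed: "T (x, y) = (x, y)"
  shows "y = x"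
    and "T (u, v) = (u, v) \<longleftrightarrow> u = x \<and> v = x"
    and "(\<lambda>n. (T ^^ n) p) \<longlonglongrightarrow> (x, x)"
proof -
  note asymptotic = asymptotic_if_connected[OF connected]
  have "T (y, x) = (y, x)"
    using fixed by (simp add: T_def)
  from asymptotic_fixed_points_eq[OF asymptotic this fixed] show "y = x" by blast
  with fixed have diag: "T (x, x) = (x, x)" by simp
  show "T (u, v) = (u, v) \<longleftrightarrow> u = x \<and> v = x"
    using asymptotic_fixed_points_eq[OF asymptotic _ diag, of "(u, v)"] diag by auto
  have "(\<lambda>n. D ((T ^^ n) p) (x, x)) \<longlonglongrightarrow> 0"
    using asymptotic[of p "(x, x)"] by (simp add: asymptotic_def funpow_fixed_point[where f = T, OF diag])
  then show "(\<lambda>n. (T ^^ n) p) \<longlonglongrightarrow> (x, x)"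
    by (rule tendsto_iff_D[THEN iffD2])
qed

end

theorem theorem7:
  fixes le :: "'a::complete_space \<Rightarrow> 'a \<Rightarrow> bool"
    and F :: "'a \<Rightarrow> 'a \<Rightarrow> 'a"
  assumes refl: "\<And>x. le x x"
    and antisym: "\<And>x y. le x y \<Longrightarrow> le y x \<Longrightarrow> x = y"
    and trans: "\<And>x y z. le x y \<Longrightarrow> le y z \<Longrightarrow> le x z"
    and contr: "\<forall>\<epsilon>>0. \<exists>\<delta>>0. \<forall>x y u v.
        le x u \<and> le v y \<and> \<epsilon> \<le> (dist x u + dist y v) / 2 \<and> (dist x u + dist y v) / 2 < \<epsilon> + \<delta>
        \<longrightarrow> dist (F x y) (F u v) < \<epsilon>"
    and H1: "mixed_monotone le F"
    and H2: "\<exists>x0 y0. le x0 (F x0 y0) \<and> le (F y0 x0) y0"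
    and H34: "continuous_on UNIV (\<lambda>p. F (fst p) (snd p)) \<or>
      ((\<forall>s x. (\<forall>m n. m \<le> n \<longrightarrow> le (s m) (s n)) \<and> s \<longlonglongrightarrow> x \<longrightarrow> (\<forall>n. le (s n) x)) \<and>
       (\<forall>s x. (\<forall>m n. m \<le> n \<longrightarrow> le (s n) (s m)) \<and> s \<longlonglongrightarrow> x \<longrightarrow> (\<forall>n. le x (s n))))"
  shows "(\<exists>xs ys. F xs ys = xs \<and> F ys xs = ys) \<and>
    (preceq_connected le \<longrightarrow>
      (\<exists>xs. (\<forall>u v. (F u v = u \<and> F v u = v) \<longleftrightarrow> (u = xs \<and> v = xs)) \<and>
            (\<forall>u. F u u = u \<longleftrightarrow> u = xs) \<and>
            (\<forall>x y. (\<lambda>n. coupled_iter n F x y) \<longlonglongrightarrow> xs)))"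
proof -
  interpret coupled_Meir_Keeler le F
    using refl trans contr H1 by unfold_locales
  have fixed_iff: "T (u, v) = (u, v) \<longleftrightarrow> F u v = u \<and> F v u = v" for u v
    by (simp add: T_def)
  from H2 obtain x0 y0 where "pair_le (x0, y0) (T (x0, y0))"
    by (auto simp: pair_le_def T_def)
  from exists_fixed_point[OF this H34] obtain xs ys where fixed: "T (xs, ys) = (xs, ys)"
    by (auto simp: prod_eq_iff)
  have "(\<lambda>n. coupled_iter n F x y) \<longlonglongrightarrow> xs" if "preceq_connected le" for x y
    using tendsto_fst[OF connected_fixed_point(3)[OF that fixed, of "(x, y)"]]
    by (simp add: funpow_T_Pair)
  moreover have "F u v = u \<and> F v u = v \<longleftrightarrow> u = xs \<and> v = xs" if "preceq_connected le" for u v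
    using connected_fixed_point(2)[OF that fixed] fixed_iff by blast
  ultimately show ?thesis
    using fixed fixed_iff by blast
qed

end
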